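(* Let $0\le k\le n$ and $\lambda,\mu\vdash n$. Then $$m\big((\lambda,\mu),\alpha_{H_n^k}\big)=\big\langle\chi_\lambda\downarrow^{S_n}_{S_{n-k}},\chi_\mu\downarrow^{S_n}_{S_{n-k}}\big\rangle_{S_{n-k}},$$ that is, $\alpha_{H_n^k}\cong\bigoplus_{\lambda,\mu\vdash n}\langle\chi_\lambda\downarrow^{S_n}_{S_{n-k}},\chi_\mu\downarrow^{S_n}_{S_{n-k}}\rangle\, S^\lambda\otimes S^\mu$.
   Context: Permutations are composed as functions, and $\pi\in S_n$ is identified with the permutation matrix whose $(i,j)$ entry is $1$ iff $i=\pi(j)$. For $A\in GL_n(\mathbb{Z}_2)$ let $\eta(A)$ (resp. $\theta(A)$) be the partition obtained by sorting the row sums (resp. column sums) of $A$, computed as integers, in weakly decreasing order. For $0\le k\le n$, $H_n^k=\{A\in GL_n(\mathbb{Z}_2)\mid \eta(A)=(n,n-1,\dots,n-k+1,1^{n-k}),\ \theta(A)=((k+1)^{n-k},k,k-1,\dots,1)\}$. $\alpha_{H_n^k}$ is the complex permutation representation of $S_n\times S_n$ on the space with basis $H_n^k$ given by $(\pi,\sigma)\bullet A=\pi A\sigma^{-1}$. $m((\lambda,\mu),\varphi)$ is the multiplicity of the irreducible $S_n\times S_n$-module $S^\lambda\otimes S^\mu$ in $\varphi$. $\chi_\lambda$ is the irreducible character of $S_n$ indexed by $\lambda$; $S_{n-k}$ is embedded in $S_n$ as the permutations fixing $1,\dots,k$; $\langle\cdot,\cdot\rangle_{S_{n-k}}$ is the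 standard inner product of class functions on $S_{n-k}$. *)

theory Defs
  imports Complex_Main "HOL-Combinatorics.Permutations" "HOL-Library.FuncSet"
begin

text \<open>A matrix over Z_2 is a function nat => nat => bool (True = 1),
  extensional: False outside {1..n} x {1..n}.\<close>

definition mats :: "nat \<Rightarrow> (nat \<Rightarrow> nat \<Rightarrow> bool) set" where
  "mats n = {A. \<forall>i j. A i j \<longrightarrow> i \<in> {1..n} \<and> j \<in> {1..n}}"

definition gf2_mult :: "nat \<Rightarrow> (nat \<Rightarrow> nat \<Rightarrow> bool) \<Rightarrow> (nat \<Rightarrow> nat \<Rightarrow> bool) \<Rightarrow> (nat \<Rightarrow> nat \<Rightarrow> bool)" where
  "gf2_mult n A B = (\<lambda>i j. i \<in> {1..n} \<and> j \<in> {1..n} \<and>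
      odd (card {l \<in> {1..n}. A i l \<and> B l j}))"

definition id_mat :: "nat \<Rightarrow> (nat \<Rightarrow> nat \<Rightarrow> bool)" where
  "id_mat n = (\<lambda>i j. i \<in> {1..n} \<and> i = j)"

definition GL2 :: "nat \<Rightarrow> (nat \<Rightarrow> nat \<Rightarrow> bool) set" where
  "GL2 n = {A \<in> mats n. \<exists>B \<in> mats n. gf2_mult n A B = id_mat n \<and> gf2_mult n B A = id_mat n}"

definition perm_mat :: "nat \<Rightarrow> (nat \<Rightarrow> nat) \<Rightarrow> (nat \<Rightarrow> nat \<Rightarrow> bool)" where
  "perm_mat n p = (\<lambda>i j. i \<in> {1..n} \<and> j \<in> {1..n} \<and> i = p j)"

definition act :: "nat \<Rightarrow> (nat \<Rightarrow> nat) \<Rightarrow> (nat \<Rightarrow> nat) \<Rightarrow> (nat \<Rightarrow> nat \<Rightarrow> bool) \<Rightarrow> (nat \<Rightarrow> nat \<Rightarrow> bool)" where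
  "act n p s A = gf2_mult n (gf2_mult n (perm_mat n p) A) (perm_mat n (inv s))"

definition row_sum :: "nat \<Rightarrow> (nat \<Rightarrow> nat \<Rightarrow> bool) \<Rightarrow> nat \<Rightarrow> nat" where
  "row_sum n A i = card {j \<in> {1..n}. A i j}"

definition col_sum :: "nat \<Rightarrow> (nat \<Rightarrow> nat \<Rightarrow> bool) \<Rightarrow> nat \<Rightarrow> nat" where
  "col_sum n A j = card {i \<in> {1..n}. A i j}"

definition eta :: "nat \<Rightarrow> (nat \<Rightarrow> nat \<Rightarrow> bool) \<Rightarrow> nat list" where
  "eta n A = rev (sort (map (row_sum n A) [1..<n+1]))"

definition theta :: "nat \<Rightarrow> (nat \<Rightarrow> nat \<Rightarrow> bool) \<Rightarrow> nat list" where
  "theta n A = rev (sort (map (col_sum n A) [1..<n+1]))"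

definition H :: "nat \<Rightarrow> nat \<Rightarrow> (nat \<Rightarrow> nat \<Rightarrow> bool) set" where
  "H n k = {A \<in> GL2 n.
      eta n A = map (\<lambda>i. n - i) [0..<k] @ replicate (n - k) 1 \<and>
      theta n A = replicate (n - k) (k + 1) @ map (\<lambda>i. k - i) [0..<k]}"

definition is_partition :: "nat \<Rightarrow> nat list \<Rightarrow> bool" where
  "is_partition n la \<longleftrightarrow> sorted_wrt (\<ge>) la \<and> 0 \<notin> set la \<and> sum_list la = n"

text \<open>Permutation character of S_n on ordered set partitions of {1..n} of
  type alpha (the character of the Young permutation module M^alpha):
  number of maps f : {1..n} -> {0..<l} with fibre sizes alpha that are
  constant on cycles of sigma; zero if some entry is negative.\<close>
definition young_perm_char :: "nat \<Rightarrow> int list \<Rightarrow> (nat \<Rightarrow> nat) \<Rightarrow> int" where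
  "young_perm_char n al sg =
     (if \<exists>a \<in> set al. a < 0 then 0 else
      int (card {f \<in> {1..n} \<rightarrow>\<^sub>E {0..<length al}.
          (\<forall>i < length al. int (card {x \<in> {1..n}. f x = i}) = al ! i) \<and>
          (\<forall>x \<in> {1..n}. f (sg x) = f x)}))"

text \<open>Irreducible character chi_lambda of S_n, defined by the
  determinantal (Jacobi-Trudi / Frobenius) formula
  chi_lambda = det (phi^(lambda_i - i + j))_{i,j}.\<close>
definition irr_char :: "nat \<Rightarrow> nat list \<Rightarrow> (nat \<Rightarrow> nat) \<Rightarrow> int" where
  "irr_char n la sg =
     (\<Sum>w \<in> {w. w permutes {0..<length la}}.
        sign w * young_perm_char n
          (map (\<lambda>i. int (la ! i) - int i + int (w i)) [0..<length la]) sg)"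

text \<open>Multiplicity of S^lambda (x) S^mu in the permutation representation of
  S_n x S_n on the set H_n^k: the inner product of its character
  (number of fixed points) with chi_lambda x chi_mu.\<close>
definition mult_H :: "nat \<Rightarrow> nat \<Rightarrow> nat list \<Rightarrow> nat list \<Rightarrow> real" where
  "mult_H n k la mu =
     (\<Sum>p \<in> {p. p permutes {1..n}}. \<Sum>s \<in> {s. s permutes {1..n}}.
        real_of_int (irr_char n la p * irr_char n mu s) *
        real (card {A \<in> H n k. act n p s A = A})) / (real (fact n))^2"

text \<open>Inner product of restrictions to S_{n-k} (permutations fixing 1..k).\<close>
definition restr_ip :: "nat \<Rightarrow> nat \<Rightarrow> nat list \<Rightarrow> nat list \<Rightarrow> real" where
  "restr_ip n k la mu =
     (\<Sum>t \<in> {t. t permutes {k+1..n}}.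
        real_of_int (irr_char n la t * irr_char n mu t)) / real (fact (n - k))"

end

theory Submission
  imports Defs
begin

(*
  Let Z_k be the staircase 0/1 matrix whose rows i <= k carry ones in the columns i..n and
  whose rows i > k carry a single one on the diagonal; its row and column sums are those
  prescribed by H_n^k. Conversely, a 0/1 matrix with these line sums and k > 0 has a row full
  of ones and a column whose only one lies in that row; deleting both leaves the line sums for
  (n - 1, k - 1), and for k = 0 the matrix is a permutation matrix. Hence every element of H_n^k
  is Z_k with permuted rows and columns, and since Z_k is invertible over Z_2, H_n^k is a single
  orbit of S_n x S_n. The pairs (pi, sigma) fixing Z_k are the diagonal pairs (tau, tau) with tau
  fixing 1..k, so alpha_{H_n^k} is induced from a diagonal copy of S_{n-k}. Counting fixed points
  orbit by orbit and using that characters are class functions gives the inner product of the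
  restrictions (Frobenius reciprocity). Only the conjugation invariance of irr_char enters.
*)

lemma card_filter_permutes:
  assumes v: "v permutes S"
  shows "card {j \<in> S. P (v j)} = card {j \<in> S. P j}"
proof (rule bij_betw_same_card)
  have "v ` {j \<in> S. P (v j)} = {j \<in> S. P j}"
    using v by (auto simp: permutes_in_image intro!: image_eqI[where x = "inv v _"]
        simp add: permutes_inverses(1) permutes_inv)
  then show "bij_betw v {j \<in> S. P (v j)} {j \<in> S. P j}"
    using permutes_inj_on[OF v] by (simp add: bij_betw_def)
qed

lemma bij_betw_extend_permutes:
  assumes "bij_betw f S S"
  obtains p where "p permutes S" and "\<And>x. x \<in> S \<Longrightarrow> p x = f x"
proof
  let ?p = "\<lambda>x. if x \<in> S then f x else x"
  have "bij_betw ?p S S"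
    using assms by (rule bij_betw_cong[THEN iffD1, rotated]) simp
  then show "?p permutes S" by (rule bij_imp_permutes) simp
qed simp

lemma eq_comp_inv_iff_conj:
  assumes "bij c" and "bij p"
  shows "c = t \<circ> c \<circ> inv p \<longleftrightarrow> p = inv c \<circ> t \<circ> c"
proof -
  have "c = t \<circ> c \<circ> inv p \<longleftrightarrow> c \<circ> p = t \<circ> c"
    using assms by (metis bij_is_inj bij_is_surj inv_o_cancel surj_iff o_assoc comp_id)
  also have "\<dots> \<longleftrightarrow> p = inv c \<circ> t \<circ> c"
    using assms by (metis bij_is_inj bij_is_surj inv_o_cancel surj_iff o_assoc id_comp)
  finally show ?thesis .
qed

lemma bij_betw_prepend:
  assumes g: "bij_betw g {1..m} A" and a: "a \<notin> A"
  shows "bij_betw (\<lambda>i. if i = 1 then a else g (i - 1)) {1..Suc m} (insert a A)"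
proof -
  have "bij_betw (\<lambda>i. i - 1) {2..Suc m} {1..m}"
    by (rule bij_betw_byWitness[where f' = Suc]) auto
  from bij_betw_trans[OF this g] have shifted: "bij_betw (\<lambda>i. g (i - 1)) {2..Suc m} A"
    by (simp add: o_def)
  have "bij_betw (\<lambda>i. if i \<in> {1} then a else g (i - 1)) ({1} \<union> {2..Suc m}) ({a} \<union> A)"
    by (rule bij_betw_disjoint_Un) (use shifted a in auto)
  moreover have "{1} \<union> {2..Suc m} = {1..Suc m}" by (auto simp: le_Suc_eq)
  ultimately show ?thesis by simp
qed

lemma rev_sort_eq_iff:
  fixes xs :: "'a::linorder list"
  assumes "sorted (rev L)"
  shows "rev (sort xs) = L \<longleftrightarrow> mset xs = mset L"
  using properties_for_sort[of "rev L" xs] assms by (metis mset_rev mset_sort rev_rev_ident)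

lemma mset_map_upt_from_1: "mset (map f [1..<n+1]) = image_mset f (mset_set {1..n})"
  by (simp only: mset_map mset_upt atLeastLessThanSuc_atLeastAtMost flip: Suc_eq_plus1)

lemma image_mset_eq_replicate_msetD:
  assumes "finite A" and "image_mset f (mset_set A) = replicate_mset m a" and "x \<in> A"
  shows "f x = a"
proof -
  have "f x \<in># image_mset f (mset_set A)" using assms(1,3) by simp
  then show ?thesis unfolding assms(2) by (simp split: if_splits)
qed

lemma card_image_mult_fibre:
  assumes "finite A" and "\<And>x. x \<in> A \<Longrightarrow> card {y \<in> A. f y = f x} = m"
  shows "card (f ` A) * m = card A"
proof -
  have "card A = (\<Sum>b\<in>f ` A. card {y \<in> A. f y = b})"
    using sum.image_gen[OF assms(1), of "\<lambda>_. 1::nat" f] by simp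
  also have "\<dots> = (\<Sum>b\<in>f ` A. m)"
    using assms(2) by (intro sum.cong) auto
  finally show ?thesis by simp
qed

lemma sum_weighted_card_filter_swap:
  fixes F :: "'g \<Rightarrow> 'a::comm_semiring_1"
  assumes "finite G" and "finite X"
  shows "(\<Sum>g\<in>G. F g * of_nat (card {x \<in> X. P g x})) = (\<Sum>x\<in>X. \<Sum>g\<in>{g \<in> G. P g x}. F g)"
proof -
  have "(\<Sum>g\<in>G. F g * of_nat (card {x \<in> X. P g x})) = (\<Sum>g\<in>G. \<Sum>x\<in>X. if P g x then F g else 0)"
    by (simp add: sum.inter_filter[OF assms(2), symmetric] mult.commute)
  also have "\<dots> = (\<Sum>x\<in>X. \<Sum>g\<in>G. if P g x then F g else 0)"
    by (rule sum.swap)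
  also have "\<dots> = (\<Sum>x\<in>X. \<Sum>g\<in>{g \<in> G. P g x}. F g)"
    by (simp add: sum.inter_filter[OF assms(1)])
  finally show ?thesis .
qed

section \<open>Relabelling rows and columns\<close>

definition relabel :: "nat \<Rightarrow> (nat \<Rightarrow> nat) \<Rightarrow> (nat \<Rightarrow> nat) \<Rightarrow> (nat \<Rightarrow> nat \<Rightarrow> bool) \<Rightarrow> nat \<Rightarrow> nat \<Rightarrow> bool" where
  "relabel n c d M = (\<lambda>i j. i \<in> {1..n} \<and> j \<in> {1..n} \<and> M (c i) (d j))"

lemma relabel_in_mats: "relabel n c d M \<in> mats n"
  by (auto simp: mats_def relabel_def)

lemma relabel_id_mats: "M \<in> mats n \<Longrightarrow> relabel n id id M = M"
  by (auto simp: mats_def relabel_def fun_eq_iff)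

lemma relabel_eq_iff:
  "relabel n c d M = relabel n c' d' M' \<longleftrightarrow> (\<forall>i\<in>{1..n}. \<forall>j\<in>{1..n}. M (c i) (d j) = M' (c' i) (d' j))"
  unfolding relabel_def fun_eq_iff by blast

lemma relabel_relabel:
  assumes "c permutes {1..n}" "d permutes {1..n}"
  shows "relabel n c d (relabel n c' d' M) = relabel n (c' \<circ> c) (d' \<circ> d) M"
  using assms by (auto simp: relabel_def fun_eq_iff permutes_in_image simp del: atLeastAtMost_iff)

lemma relabel_inv_relabel:
  assumes "c permutes {1..n}" "d permutes {1..n}" "A \<in> mats n"
  shows "relabel n (inv c) (inv d) (relabel n c d A) = A"
  using assms by (simp add: relabel_relabel permutes_inv permutes_inv_o relabel_id_mats)

lemma gf2_mult_relabel:
  assumes c: "c permutes {1..n}" and d: "d permutes {1..n}" and e: "e permutes {1..n}"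
  shows "gf2_mult n (relabel n c d A) (relabel n d e B) = relabel n c e (gf2_mult n A B)"
proof (intro ext)
  fix i j
  show "gf2_mult n (relabel n c d A) (relabel n d e B) i j = relabel n c e (gf2_mult n A B) i j"
  proof (cases "i \<in> {1..n} \<and> j \<in> {1..n}")
    case True
    then have "card {l \<in> {1..n}. relabel n c d A i l \<and> relabel n d e B l j}
        = card {l \<in> {1..n}. A (c i) (d l) \<and> B (d l) (e j)}"
      by (intro arg_cong[where f = card]) (auto simp: relabel_def)
    also have "\<dots> = card {l \<in> {1..n}. A (c i) l \<and> B l (e j)}"
      by (rule card_filter_permutes[OF d])
    finally have "gf2_mult n (relabel n c d A) (relabel n d e B) i j
        \<longleftrightarrow> odd (card {l \<in> {1..n}. A (c i) l \<and> B l (e j)})"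
      using True by (simp add: gf2_mult_def)
    also have "\<dots> \<longleftrightarrow> relabel n c e (gf2_mult n A B) i j"
      using True permutes_in_image[OF c, of i] permutes_in_image[OF e, of j]
      by (simp add: gf2_mult_def relabel_def)
    finally show ?thesis .
  qed (auto simp: gf2_mult_def relabel_def)
qed

lemma gf2_mult_in_mats: "gf2_mult n A B \<in> mats n"
  by (auto simp: mats_def gf2_mult_def)

lemma gf2_mult_id_left: "A \<in> mats n \<Longrightarrow> gf2_mult n (id_mat n) A = A"
proof (intro ext)
  fix i j assume "A \<in> mats n"
  then have "{l \<in> {1..n}. id_mat n i l \<and> A l j} = (if i \<in> {1..n} \<and> A i j then {i} else {})"
    by (auto simp: id_mat_def)
  then show "gf2_mult n (id_mat n) A i j = A i j"
    using \<open>A \<in> mats n\<close> by (auto simp: gf2_mult_def mats_def)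
qed

lemma gf2_mult_id_right: "A \<in> mats n \<Longrightarrow> gf2_mult n A (id_mat n) = A"
proof (intro ext)
  fix i j assume "A \<in> mats n"
  then have "{l \<in> {1..n}. A i l \<and> id_mat n l j} = (if j \<in> {1..n} \<and> A i j then {j} else {})"
    by (auto simp: id_mat_def)
  then show "gf2_mult n A (id_mat n) i j = A i j"
    using \<open>A \<in> mats n\<close> by (auto simp: gf2_mult_def mats_def)
qed

lemma gf2_mult_eq_id_mat:
  assumes "\<And>i j. i \<in> {1..n} \<Longrightarrow> j \<in> {1..n} \<Longrightarrow> odd (card {l \<in> {1..n}. A i l \<and> B l j}) \<longleftrightarrow> i = j"
  shows "gf2_mult n A B = id_mat n"
proof (intro ext)
  fix i j
  show "gf2_mult n A B i j = id_mat n i j"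
  proof (cases "i \<in> {1..n} \<and> j \<in> {1..n}")
    case True
    then show ?thesis using assms[of i j] by (simp add: gf2_mult_def id_mat_def)
  qed (unfold gf2_mult_def id_mat_def, blast)
qed

lemma relabel_id_mat: "c permutes {1..n} \<Longrightarrow> relabel n c c (id_mat n) = id_mat n"
  by (auto simp: relabel_def id_mat_def fun_eq_iff permutes_in_image permutes_inj[THEN injD]
      simp del: atLeastAtMost_iff)

lemma perm_mat_eq_relabel:
  assumes "p permutes {1..n}"
  shows "perm_mat n p = relabel n (inv p) id (id_mat n)" and "perm_mat n p = relabel n id p (id_mat n)"
  using assms by (auto simp: perm_mat_def relabel_def id_mat_def fun_eq_iff permutes_in_image
      permutes_inv permutes_inverses)

lemma act_eq_relabel:
  assumes A: "A \<in> mats n" and p: "p permutes {1..n}" and s: "s permutes {1..n}"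
  shows "act n p s A = relabel n (inv p) (inv s) A"
proof -
  have ip: "inv p permutes {1..n}" and is': "inv s permutes {1..n}"
    using p s by (simp_all add: permutes_inv)
  have "act n p s A = gf2_mult n (gf2_mult n (relabel n (inv p) id (id_mat n)) (relabel n id id A))
      (relabel n id (inv s) (id_mat n))"
    unfolding act_def perm_mat_eq_relabel(1)[OF p] perm_mat_eq_relabel(2)[OF is'] relabel_id_mats[OF A] ..
  also have "\<dots> = relabel n (inv p) (inv s) (gf2_mult n (gf2_mult n (id_mat n) A) (id_mat n))"
    unfolding gf2_mult_relabel[OF ip permutes_id permutes_id] gf2_mult_relabel[OF ip permutes_id is'] ..
  also have "\<dots> = relabel n (inv p) (inv s) A"
    using A by (simp add: gf2_mult_id_left gf2_mult_id_right)
  finally show ?thesis .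
qed

lemma act_relabel:
  assumes p: "p permutes {1..n}" and s: "s permutes {1..n}"
  shows "act n p s (relabel n c d M) = relabel n (c \<circ> inv p) (d \<circ> inv s) M"
  unfolding act_eq_relabel[OF relabel_in_mats p s]
  by (rule relabel_relabel[OF permutes_inv[OF p] permutes_inv[OF s]])

lemma relabel_GL2:
  assumes A: "A \<in> GL2 n" and c: "c permutes {1..n}" and d: "d permutes {1..n}"
  shows "relabel n c d A \<in> GL2 n"
proof -
  obtain B where B: "B \<in> mats n" "gf2_mult n A B = id_mat n" "gf2_mult n B A = id_mat n"
    using A by (auto simp: GL2_def)
  have "gf2_mult n (relabel n c d A) (relabel n d c B) = id_mat n"
    unfolding gf2_mult_relabel[OF c d c] B(2) relabel_id_mat[OF c] ..
  moreover have "gf2_mult n (relabel n d c B) (relabel n c d A) = id_mat n"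
    unfolding gf2_mult_relabel[OF d c d] B(3) relabel_id_mat[OF d] ..
  ultimately show ?thesis
    unfolding GL2_def using relabel_in_mats by blast
qed

lemma eta_eq_iff:
  "sorted (rev L) \<Longrightarrow> eta n A = L \<longleftrightarrow> image_mset (row_sum n A) (mset_set {1..n}) = mset L"
  unfolding eta_def mset_map_upt_from_1[symmetric] by (rule rev_sort_eq_iff)

lemma theta_eq_iff:
  "sorted (rev L) \<Longrightarrow> theta n A = L \<longleftrightarrow> image_mset (col_sum n A) (mset_set {1..n}) = mset L"
  unfolding theta_def mset_map_upt_from_1[symmetric] by (rule rev_sort_eq_iff)

lemma row_sums_relabel:
  assumes c: "c permutes {1..n}" and d: "d permutes {1..n}"
  shows "image_mset (row_sum n (relabel n c d M)) (mset_set {1..n})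
       = image_mset (\<lambda>i. card {j \<in> {1..n}. M i j}) (mset_set {1..n})"
proof (rule permutes_implies_image_mset_eq[OF c, symmetric])
  fix i assume "i \<in> {1..n}"
  then have "row_sum n (relabel n c d M) i = card {j \<in> {1..n}. M (c i) (d j)}"
    unfolding row_sum_def relabel_def by (intro arg_cong[where f = card]) auto
  also have "\<dots> = card {j \<in> {1..n}. M (c i) j}"
    by (rule card_filter_permutes[OF d])
  finally show "row_sum n (relabel n c d M) i = card {j \<in> {1..n}. M (c i) j}" .
qed

lemma col_sums_relabel:
  assumes c: "c permutes {1..n}" and d: "d permutes {1..n}"
  shows "image_mset (col_sum n (relabel n c d M)) (mset_set {1..n})
       = image_mset (\<lambda>j. card {i \<in> {1..n}. M i j}) (mset_set {1..n})"
proof (rule permutes_implies_image_mset_eq[OF d, symmetric])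
  fix j assume "j \<in> {1..n}"
  then have "col_sum n (relabel n c d M) j = card {i \<in> {1..n}. M (c i) (d j)}"
    unfolding col_sum_def relabel_def by (intro arg_cong[where f = card]) auto
  also have "\<dots> = card {i \<in> {1..n}. M i (d j)}"
    by (rule card_filter_permutes[OF c, of "\<lambda>i. M i (d j)"])
  finally show "col_sum n (relabel n c d M) j = card {i \<in> {1..n}. M i (d j)}" .
qed

section \<open>The staircase matrix\<close>

definition staircase :: "nat \<Rightarrow> nat \<Rightarrow> nat \<Rightarrow> bool" where
  "staircase k i j \<longleftrightarrow> (i \<le> k \<and> i \<le> j) \<or> (k < i \<and> i = j)"

definition staircase_inv :: "nat \<Rightarrow> nat \<Rightarrow> nat \<Rightarrow> bool" where
  "staircase_inv k l j \<longleftrightarrow> (l < k \<and> (j = l \<or> j = l + 1)) \<or> (l = k \<and> k \<le> j) \<or> (k < l \<and> j = l)"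

lemma odd_card_staircase_staircase_inv:
  assumes k: "k \<le> n" and i: "i \<in> {1..n}" and j: "j \<in> {1..n}"
  shows "odd (card {l \<in> {1..n}. staircase k i l \<and> staircase_inv k l j}) \<longleftrightarrow> i = j"
proof (cases "k < i")
  case True
  then have e: "{l \<in> {1..n}. staircase k i l \<and> staircase_inv k l j} = (if j = i then {i} else {})"
    using i j by (auto simp: staircase_def staircase_inv_def)
  show ?thesis unfolding e by simp
next
  case False
  consider "j < i" | "j = i" | "i < j" "j \<le> k" | "k < j" by linarith
  then show ?thesis
  proof cases
    case 1
    then have e: "{l \<in> {1..n}. staircase k i l \<and> staircase_inv k l j} = {}"
      using False by (auto simp: staircase_def staircase_inv_def)
    show ?thesis unfolding e using 1 by simp
  next
    case 2
    then have e: "{l \<in> {1..n}. staircase k i l \<and> staircase_inv k l j} = {i}"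
      using False i by (auto simp: staircase_def staircase_inv_def)
    show ?thesis unfolding e using 2 by simp
  next
    case 3
    then have e: "{l \<in> {1..n}. staircase k i l \<and> staircase_inv k l j} = {j - 1, j}"
      using False i j by (auto simp: staircase_def staircase_inv_def)
    show ?thesis unfolding e using 3 by simp
  next
    case 4
    then have e: "{l \<in> {1..n}. staircase k i l \<and> staircase_inv k l j} = {k, j}"
      using False i j by (auto simp: staircase_def staircase_inv_def)
    show ?thesis unfolding e using 4 False by simp
  qed
qed

lemma odd_card_staircase_inv_staircase:
  assumes k: "k \<le> n" and i: "i \<in> {1..n}" and j: "j \<in> {1..n}"
  shows "odd (card {l \<in> {1..n}. staircase_inv k i l \<and> staircase k l j}) \<longleftrightarrow> i = j"
proof -
  consider "k < i" | "i < k" "j < i" | "i < k" "j = i" | "i < k" "i < j"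
    | "i = k" "j < k" | "i = k" "j = k" | "i = k" "k < j"
    by linarith
  then show ?thesis
  proof cases
    case 1
    then have e: "{l \<in> {1..n}. staircase_inv k i l \<and> staircase k l j} = (if j = i then {i} else {})"
      using i j by (auto simp: staircase_def staircase_inv_def)
    show ?thesis unfolding e by simp
  next
    case 2
    then have e: "{l \<in> {1..n}. staircase_inv k i l \<and> staircase k l j} = {}"
      by (auto simp: staircase_def staircase_inv_def)
    show ?thesis unfolding e using 2 by simp
  next
    case 3
    then have e: "{l \<in> {1..n}. staircase_inv k i l \<and> staircase k l j} = {i}"
      using i by (auto simp: staircase_def staircase_inv_def)
    show ?thesis unfolding e using 3 by simp
  next
    case 4
    then have e: "{l \<in> {1..n}. staircase_inv k i l \<and> staircase k l j} = {i, i + 1}"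
      using i k by (auto simp: staircase_def staircase_inv_def)
    show ?thesis unfolding e using 4 by simp
  next
    case 5
    then have e: "{l \<in> {1..n}. staircase_inv k i l \<and> staircase k l j} = {}"
      by (auto simp: staircase_def staircase_inv_def)
    show ?thesis unfolding e using 5 by simp
  next
    case 6
    then have e: "{l \<in> {1..n}. staircase_inv k i l \<and> staircase k l j} = {k}"
      using i by (auto simp: staircase_def staircase_inv_def)
    show ?thesis unfolding e using 6 by simp
  next
    case 7
    then have e: "{l \<in> {1..n}. staircase_inv k i l \<and> staircase k l j} = {k, j}"
      using i j by (auto simp: staircase_def staircase_inv_def)
    show ?thesis unfolding e using 7 by simp
  qed
qed

lemma staircase_in_GL2:
  assumes "k \<le> n"
  shows "relabel n id id (staircase k) \<in> GL2 n"
proof -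
  have restrict: "gf2_mult n (relabel n id id A) (relabel n id id B) = gf2_mult n A B" for A B
    using gf2_mult_relabel[OF permutes_id permutes_id permutes_id, of n A B]
    by (simp add: relabel_id_mats gf2_mult_in_mats)
  have "gf2_mult n (relabel n id id (staircase k)) (relabel n id id (staircase_inv k)) = id_mat n"
    unfolding restrict by (rule gf2_mult_eq_id_mat) (rule odd_card_staircase_staircase_inv[OF assms])
  moreover have "gf2_mult n (relabel n id id (staircase_inv k)) (relabel n id id (staircase k)) = id_mat n"
    unfolding restrict by (rule gf2_mult_eq_id_mat) (rule odd_card_staircase_inv_staircase[OF assms])
  ultimately show ?thesis
    unfolding GL2_def using relabel_in_mats by blast
qed

lemma card_staircase_row:
  assumes "k \<le> n" and "i \<in> {1..n}"
  shows "card {j \<in> {1..n}. staircase k i j} = (if i \<le> k then n + 1 - i else 1)"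
proof (cases "i \<le> k")
  case True
  then have "{j \<in> {1..n}. staircase k i j} = {i..n}" using assms by (auto simp: staircase_def)
  then show ?thesis using True by simp
next
  case False
  then have "{j \<in> {1..n}. staircase k i j} = {i}" using assms by (auto simp: staircase_def)
  then show ?thesis using False by simp
qed

lemma card_staircase_col:
  assumes "k \<le> n" and "j \<in> {1..n}"
  shows "card {i \<in> {1..n}. staircase k i j} = (if j \<le> k then j else k + 1)"
proof (cases "j \<le> k")
  case True
  then have "{i \<in> {1..n}. staircase k i j} = {1..j}" using assms by (auto simp: staircase_def)
  then show ?thesis using True by simp
next
  case False
  then have "{i \<in> {1..n}. staircase k i j} = insert j {1..k}" using assms by (auto simp: staircase_def)
  then show ?thesis using False by simp
qed

definition stair_row_sums :: "nat \<Rightarrow> nat \<Rightarrow> nat list" where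
  "stair_row_sums m k = map (\<lambda>i. m - i) [0..<k] @ replicate (m - k) 1"

definition stair_col_sums :: "nat \<Rightarrow> nat \<Rightarrow> nat list" where
  "stair_col_sums m k = replicate (m - k) (k + 1) @ map (\<lambda>i. k - i) [0..<k]"

lemma H_eq_stair_sums: "H n k = {A \<in> GL2 n. eta n A = stair_row_sums n k \<and> theta n A = stair_col_sums n k}"
  by (simp add: H_def stair_row_sums_def stair_col_sums_def)

lemma stair_row_sums_Suc: "Suc k \<le> m \<Longrightarrow> stair_row_sums m (Suc k) = m # stair_row_sums (m - 1) k"
  by (simp add: stair_row_sums_def map_upt_Suc del: upt_Suc)

lemma stair_col_sums_Suc:
  "Suc k \<le> m \<Longrightarrow> stair_col_sums m (Suc k) = map Suc (stair_col_sums (m - 1) k) @ [1]"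
  by (rule nth_equalityI) (auto simp: stair_col_sums_def nth_append)

lemma sorted_rev_stair_row_sums: "k \<le> m \<Longrightarrow> sorted (rev (stair_row_sums m k))"
  by (auto simp: stair_row_sums_def sorted_wrt_append sorted_wrt_map sorted_wrt_rev
      intro: sorted_wrt_mono_rel[OF _ sorted_wrt_upt])

lemma sorted_rev_stair_col_sums: "sorted (rev (stair_col_sums m k))"
  by (auto simp: stair_col_sums_def sorted_wrt_append sorted_wrt_map sorted_wrt_rev
      intro: sorted_wrt_mono_rel[OF _ sorted_wrt_upt])

lemma staircase_row_sums:
  assumes "k \<le> n"
  shows "image_mset (\<lambda>i. card {j \<in> {1..n}. staircase k i j}) (mset_set {1..n}) = mset (stair_row_sums n k)"
proof -
  have "map (\<lambda>i. if i \<le> k then n + 1 - i else 1) [1..<n+1] = stair_row_sums n k"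
    by (rule nth_equalityI) (use assms in \<open>auto simp: stair_row_sums_def nth_append\<close>)
  then show ?thesis
    using card_staircase_row[OF assms] mset_map_upt_from_1[of "\<lambda>i. if i \<le> k then n + 1 - i else 1" n]
    by (auto intro: image_mset_cong)
qed

lemma staircase_col_sums:
  assumes "k \<le> n"
  shows "image_mset (\<lambda>j. card {i \<in> {1..n}. staircase k i j}) (mset_set {1..n}) = mset (stair_col_sums n k)"
proof -
  have "map (\<lambda>j. if j \<le> k then j else k + 1) [1..<n+1] = map Suc [0..<k] @ replicate (n - k) (k + 1)"
    by (rule nth_equalityI) (use assms in \<open>auto simp: nth_append\<close>)
  moreover have "map (\<lambda>i. k - i) [0..<k] = rev (map Suc [0..<k])"
    by (rule nth_equalityI) (auto simp: rev_nth)
  ultimately have "mset (map (\<lambda>j. if j \<le> k then j else k + 1) [1..<n+1]) = mset (stair_col_sums n k)"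
    by (simp add: stair_col_sums_def)
  then show ?thesis
    using card_staircase_col[OF assms] mset_map_upt_from_1[of "\<lambda>j. if j \<le> k then j else k + 1" n]
    by (auto intro: image_mset_cong)
qed

section \<open>Patterns with the line sums of a staircase\<close>

lemma permutation_pattern_normal_form:
  fixes M :: "'a \<Rightarrow> 'b \<Rightarrow> bool"
  assumes fR: "finite R" and fC: "finite C" and cR: "card R = m" and cC: "card C = m"
    and rows: "\<And>i. i \<in> R \<Longrightarrow> card {j \<in> C. M i j} = 1"
    and cols: "\<And>j. j \<in> C \<Longrightarrow> card {i \<in> R. M i j} = 1"
  shows "\<exists>\<sigma> \<tau>. bij_betw \<sigma> {1..m} R \<and> bij_betw \<tau> {1..m} C \<and>
     (\<forall>i\<in>{1..m}. \<forall>j\<in>{1..m}. M (\<sigma> i) (\<tau> j) \<longleftrightarrow> i = j)"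
proof -
  have "\<forall>i\<in>R. \<exists>j. {j' \<in> C. M i j'} = {j}" using rows by (metis card_1_singletonE)
  then obtain f where f: "\<And>i. i \<in> R \<Longrightarrow> {j \<in> C. M i j} = {f i}" by metis
  then have fC': "\<And>i. i \<in> R \<Longrightarrow> f i \<in> C \<and> M i (f i)" by blast
  have finj: "inj_on f R"
  proof (rule inj_onI)
    fix a b assume a: "a \<in> R" and b: "b \<in> R" and e: "f a = f b"
    have "{a, b} \<subseteq> {i \<in> R. M i (f a)}" using fC'[OF a] fC'[OF b] e a b by auto
    moreover have "card {i \<in> R. M i (f a)} = 1" using cols fC'[OF a] by blast
    ultimately show "a = b"
      by (metis card_1_singletonE insert_subset singletonD)
  qed
  have "f ` R = C"
    using fC' card_image[OF finj] cR cC fC by (intro card_subset_eq) auto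
  then have fb: "bij_betw f R C" using finj by (simp add: bij_betw_def)
  obtain \<sigma> where s: "bij_betw \<sigma> {1..m} R"
    using ex_bij_betw_nat_finite_1[OF fR] cR by blast
  have "M (\<sigma> i) (f (\<sigma> j)) \<longleftrightarrow> i = j" if "i \<in> {1..m}" and "j \<in> {1..m}" for i j
  proof -
    have si: "\<sigma> i \<in> R" and sj: "\<sigma> j \<in> R" using s that by (auto simp: bij_betw_def)
    have "M (\<sigma> i) (f (\<sigma> j)) \<longleftrightarrow> f (\<sigma> j) = f (\<sigma> i)"
      using f[OF si] fC'[OF sj] by blast
    also have "\<dots> \<longleftrightarrow> \<sigma> j = \<sigma> i" using finj si sj by (auto dest: inj_onD)
    also have "\<dots> \<longleftrightarrow> j = i" using s that by (auto simp: bij_betw_def dest: inj_onD)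
    finally show ?thesis by auto
  qed
  then show ?thesis using s bij_betw_trans[OF s fb] by (metis comp_apply)
qed

lemma row_sums_delete_single_col:
  assumes "finite R" and "r \<in> R" and "{i \<in> R. M i c} = {r}"
  shows "image_mset (\<lambda>i. card {j \<in> C - {c}. M i j}) (mset_set (R - {r}))
       = image_mset (\<lambda>i. card {j \<in> C. M i j}) (mset_set R) - {#card {j \<in> C. M r j}#}"
proof -
  have "image_mset (\<lambda>i. card {j \<in> C - {c}. M i j}) (mset_set (R - {r}))
      = image_mset (\<lambda>i. card {j \<in> C. M i j}) (mset_set (R - {r}))"
  proof (rule image_mset_cong)
    fix i assume "i \<in># mset_set (R - {r})"
    then have "\<not> M i c" using assms by auto
    then have "{j \<in> C - {c}. M i j} = {j \<in> C. M i j}" by auto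
    then show "card {j \<in> C - {c}. M i j} = card {j \<in> C. M i j}" by simp
  qed
  also have "\<dots> = image_mset (\<lambda>i. card {j \<in> C. M i j}) (mset_set R) - {#card {j \<in> C. M r j}#}"
    using assms(1,2) by (simp add: mset_set_Diff image_mset_Diff)
  finally show ?thesis .
qed

lemma col_sums_delete_full_row:
  assumes "finite R" and "finite C" and "r \<in> R" and "c \<in> C" and "{j \<in> C. M r j} = C"
  shows "image_mset (\<lambda>j. card {i \<in> R - {r}. M i j}) (mset_set (C - {c}))
       = image_mset (\<lambda>x. x - 1) (image_mset (\<lambda>j. card {i \<in> R. M i j}) (mset_set C) - {#card {i \<in> R. M i c}#})"
proof -
  have "image_mset (\<lambda>j. card {i \<in> R - {r}. M i j}) (mset_set (C - {c}))
      = image_mset (\<lambda>x. x - 1) (image_mset (\<lambda>j. card {i \<in> R. M i j}) (mset_set (C - {c})))"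
    unfolding image_mset.compositionality
  proof (rule image_mset_cong)
    fix j assume "j \<in># mset_set (C - {c})"
    then have "M r j" using assms(2,5) by auto
    then have "{i \<in> R - {r}. M i j} = {i \<in> R. M i j} - {r}" by auto
    then show "card {i \<in> R - {r}. M i j} = ((\<lambda>x. x - 1) \<circ> (\<lambda>j. card {i \<in> R. M i j})) j"
      using \<open>M r j\<close> assms(1,3) by simp
  qed
  then show ?thesis using assms(2,4) by (simp add: mset_set_Diff image_mset_Diff)
qed

lemma staircase_pattern_Suc:
  assumes \<sigma>': "bij_betw \<sigma>' {1..m} (R - {r})" and \<tau>': "bij_betw \<tau>' {1..m} (C - {c})"
    and r: "r \<in> R" and c: "c \<in> C"
    and full_row: "{j \<in> C. M r j} = C" and single_col: "{i \<in> R. M i c} = {r}"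
    and pattern: "\<forall>i\<in>{1..m}. \<forall>j\<in>{1..m}. M (\<sigma>' i) (\<tau>' j) = staircase k i j"
  shows "\<exists>\<sigma> \<tau>. bij_betw \<sigma> {1..Suc m} R \<and> bij_betw \<tau> {1..Suc m} C \<and>
     (\<forall>i\<in>{1..Suc m}. \<forall>j\<in>{1..Suc m}. M (\<sigma> i) (\<tau> j) = staircase (Suc k) i j)"
proof (intro exI conjI)
  define \<sigma> where "\<sigma> = (\<lambda>i. if i = 1 then r else \<sigma>' (i - 1))"
  define \<tau> where "\<tau> = (\<lambda>i. if i = 1 then c else \<tau>' (i - 1))"
  show \<sigma>: "bij_betw \<sigma> {1..Suc m} R"
    unfolding \<sigma>_def using bij_betw_prepend[OF \<sigma>', of r] r by (simp add: insert_absorb)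
  show \<tau>: "bij_betw \<tau> {1..Suc m} C"
    unfolding \<tau>_def using bij_betw_prepend[OF \<tau>', of c] c by (simp add: insert_absorb)
  show "\<forall>i\<in>{1..Suc m}. \<forall>j\<in>{1..Suc m}. M (\<sigma> i) (\<tau> j) = staircase (Suc k) i j"
  proof (intro ballI)
    fix i j assume i: "i \<in> {1..Suc m}" and j: "j \<in> {1..Suc m}"
    show "M (\<sigma> i) (\<tau> j) = staircase (Suc k) i j"
    proof (cases "i = 1")
      case True
      have "M r (\<tau> j)" using bij_betw_apply[OF \<tau> j] full_row by blast
      then show ?thesis using True j by (simp add: \<sigma>_def staircase_def)
    next
      case False
      then have i': "i - 1 \<in> {1..m}" using i by auto
      then have "\<not> M (\<sigma>' (i - 1)) c" using bij_betw_apply[OF \<sigma>' i'] single_col by auto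
      moreover have "M (\<sigma>' (i - 1)) (\<tau>' (j - 1)) = staircase k (i - 1) (j - 1)" if "j \<noteq> 1"
      proof -
        have "j - 1 \<in> {1..m}" using j that by auto
        then show ?thesis using pattern i' by blast
      qed
      ultimately show ?thesis using False i j by (auto simp: \<sigma>_def \<tau>_def staircase_def)
    qed
  qed
qed

lemma staircase_normal_form:
  fixes M :: "'a \<Rightarrow> 'b \<Rightarrow> bool"
  assumes "finite R" "finite C" "card R = m" "card C = m" "k \<le> m"
    and "image_mset (\<lambda>i. card {j \<in> C. M i j}) (mset_set R) = mset (stair_row_sums m k)"
    and "image_mset (\<lambda>j. card {i \<in> R. M i j}) (mset_set C) = mset (stair_col_sums m k)"
  shows "\<exists>\<sigma> \<tau>. bij_betw \<sigma> {1..m} R \<and> bij_betw \<tau> {1..m} C \<and>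
     (\<forall>i\<in>{1..m}. \<forall>j\<in>{1..m}. M (\<sigma> i) (\<tau> j) = staircase k i j)"
  using assms
proof (induction k arbitrary: m R C)
  case 0
  have "mset (stair_row_sums m 0) = replicate_mset m 1" and "mset (stair_col_sums m 0) = replicate_mset m 1"
    by (simp_all add: stair_row_sums_def stair_col_sums_def)
  then have "card {j \<in> C. M i j} = 1" if "i \<in> R" for i
    using image_mset_eq_replicate_msetD[OF "0.prems"(1) _ that] "0.prems"(6) by simp
  moreover have "card {i \<in> R. M i j} = 1" if "j \<in> C" for j
    using image_mset_eq_replicate_msetD[OF "0.prems"(2) _ that] "0.prems"(7)
      \<open>mset (stair_col_sums m 0) = replicate_mset m 1\<close> by simp
  ultimately show ?case
    using permutation_pattern_normal_form[OF "0.prems"(1-4)] by (auto simp: staircase_def)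
next
  case (Suc k)
  obtain m' where m: "m = Suc m'" using Suc.prems(5) by (cases m) auto
  let ?rf = "\<lambda>i. card {j \<in> C. M i j}" and ?cf = "\<lambda>j. card {i \<in> R. M i j}"
  have rows: "image_mset ?rf (mset_set R) = add_mset m (mset (stair_row_sums m' k))"
    using Suc.prems(5,6) by (simp add: stair_row_sums_Suc m)
  have cols: "image_mset ?cf (mset_set C) = add_mset 1 (image_mset Suc (mset (stair_col_sums m' k)))"
    using Suc.prems(5,7) by (simp add: stair_col_sums_Suc m)
  have "m \<in># image_mset ?rf (mset_set R)" unfolding rows by simp
  then obtain r where r: "r \<in> R" "?rf r = m" using Suc.prems(1) by auto
  have full_row: "{j \<in> C. M r j} = C"
    using r(2) Suc.prems(2,4) by (intro card_subset_eq) auto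
  have "1 \<in># image_mset ?cf (mset_set C)" unfolding cols by simp
  then obtain c where c: "c \<in> C" "?cf c = 1" using Suc.prems(2) by auto
  have single_col: "{i \<in> R. M i c} = {r}"
    using c full_row r(1) by (metis (no_types, lifting) card_1_singletonE mem_Collect_eq singletonD)
  have "image_mset (\<lambda>i. card {j \<in> C - {c}. M i j}) (mset_set (R - {r})) = mset (stair_row_sums m' k)"
    using row_sums_delete_single_col[where M = M, OF Suc.prems(1) r(1) single_col] rows r(2) by simp
  moreover have "image_mset (\<lambda>j. card {i \<in> R - {r}. M i j}) (mset_set (C - {c})) = mset (stair_col_sums m' k)"
    using col_sums_delete_full_row[where M = M, OF Suc.prems(1,2) r(1) c(1) full_row] cols c(2)
    by (simp add: image_mset.compositionality o_def)
  moreover have "card (R - {r}) = m'" and "card (C - {c}) = m'"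
    using Suc.prems(1-4) r(1) c(1) m by simp_all
  ultimately obtain \<sigma>' \<tau>' where "bij_betw \<sigma>' {1..m'} (R - {r})" and "bij_betw \<tau>' {1..m'} (C - {c})"
    and "\<forall>i\<in>{1..m'}. \<forall>j\<in>{1..m'}. M (\<sigma>' i) (\<tau>' j) = staircase k i j"
    using Suc.IH[of "R - {r}" "C - {c}" m'] Suc.prems(1,2,5) m by auto
  then show ?case
    using staircase_pattern_Suc[OF _ _ r(1) c(1) full_row single_col] m by blast
qed

section \<open>The orbit of the staircase and its stabiliser\<close>

lemma relabel_staircase_in_H:
  assumes k: "k \<le> n" and c: "c permutes {1..n}" and d: "d permutes {1..n}"
  shows "relabel n c d (staircase k) \<in> H n k"
proof -
  have "relabel n c d (staircase k) = relabel n c d (relabel n id id (staircase k))"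
    by (simp add: relabel_relabel[OF c d])
  then have "relabel n c d (staircase k) \<in> GL2 n"
    using relabel_GL2[OF staircase_in_GL2[OF k] c d] by simp
  moreover have "eta n (relabel n c d (staircase k)) = stair_row_sums n k"
    unfolding eta_eq_iff[OF sorted_rev_stair_row_sums[OF k]] row_sums_relabel[OF c d]
    by (rule staircase_row_sums[OF k])
  moreover have "theta n (relabel n c d (staircase k)) = stair_col_sums n k"
    unfolding theta_eq_iff[OF sorted_rev_stair_col_sums] col_sums_relabel[OF c d]
    by (rule staircase_col_sums[OF k])
  ultimately show ?thesis by (simp add: H_eq_stair_sums)
qed

lemma H_eq_orbit:
  assumes k: "k \<le> n"
  shows "H n k = {relabel n c d (staircase k) | c d. c permutes {1..n} \<and> d permutes {1..n}}"
proof (intro equalityI subsetI)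
  fix A assume "A \<in> H n k"
  then have A: "A \<in> mats n" and rows: "eta n A = stair_row_sums n k" and cols: "theta n A = stair_col_sums n k"
    by (auto simp: H_eq_stair_sums GL2_def)
  have "image_mset (\<lambda>i. card {j \<in> {1..n}. A i j}) (mset_set {1..n}) = mset (stair_row_sums n k)"
    using rows unfolding eta_eq_iff[OF sorted_rev_stair_row_sums[OF k]] row_sum_def[abs_def] .
  moreover have "image_mset (\<lambda>j. card {i \<in> {1..n}. A i j}) (mset_set {1..n}) = mset (stair_col_sums n k)"
    using cols unfolding theta_eq_iff[OF sorted_rev_stair_col_sums] col_sum_def[abs_def] .
  ultimately obtain \<sigma> \<tau> where \<sigma>: "bij_betw \<sigma> {1..n} {1..n}" and \<tau>: "bij_betw \<tau> {1..n} {1..n}"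
    and pattern: "\<forall>i\<in>{1..n}. \<forall>j\<in>{1..n}. A (\<sigma> i) (\<tau> j) = staircase k i j"
    using staircase_normal_form[of "{1..n}" "{1..n}" n k A] k by auto
  obtain \<sigma>' where \<sigma>': "\<sigma>' permutes {1..n}" "\<And>i. i \<in> {1..n} \<Longrightarrow> \<sigma>' i = \<sigma> i"
    using bij_betw_extend_permutes[OF \<sigma>] by blast
  obtain \<tau>' where \<tau>': "\<tau>' permutes {1..n}" "\<And>i. i \<in> {1..n} \<Longrightarrow> \<tau>' i = \<tau> i"
    using bij_betw_extend_permutes[OF \<tau>] by blast
  have "relabel n \<sigma>' \<tau>' A = relabel n id id (staircase k)"
    unfolding relabel_eq_iff using pattern \<sigma>'(2) \<tau>'(2) by simp
  then have "A = relabel n (inv \<sigma>') (inv \<tau>') (relabel n id id (staircase k))"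
    using relabel_inv_relabel[OF \<sigma>'(1) \<tau>'(1) A] by simp
  also have "\<dots> = relabel n (inv \<sigma>') (inv \<tau>') (staircase k)"
    by (simp add: relabel_relabel[OF permutes_inv[OF \<sigma>'(1)] permutes_inv[OF \<tau>'(1)]])
  finally show "A \<in> {relabel n c d (staircase k) | c d. c permutes {1..n} \<and> d permutes {1..n}}"
    using permutes_inv[OF \<sigma>'(1)] permutes_inv[OF \<tau>'(1)] by blast
qed (use relabel_staircase_in_H[OF k] in blast)

(* Each row sum n + 1 - i and each column sum i with i <= k occurs only once in the staircase. *)
lemma staircase_automorphism_fixes_top:
  assumes u: "u permutes {1..n}" and v: "v permutes {1..n}" and k: "k \<le> n"
    and aut: "\<forall>i\<in>{1..n}. \<forall>j\<in>{1..n}. staircase k (u i) (v j) = staircase k i j"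
    and i: "i \<in> {1..n}" "i \<le> k"
  shows "u i = i" and "v i = i"
proof -
  have "card {j \<in> {1..n}. staircase k (u i) j} = card {j \<in> {1..n}. staircase k (u i) (v j)}"
    using card_filter_permutes[OF v, of "staircase k (u i)"] ..
  also have "\<dots> = card {j \<in> {1..n}. staircase k i j}"
    using aut i by (intro arg_cong[where f = card]) auto
  finally have "card {j \<in> {1..n}. staircase k (u i) j} = card {j \<in> {1..n}. staircase k i j}" .
  moreover have ui: "u i \<in> {1..n}" using permutes_in_image[OF u] i(1) by simp
  ultimately have "(if u i \<le> k then n + 1 - u i else 1) = n + 1 - i"
    using card_staircase_row[OF k ui] card_staircase_row[OF k i(1)] i(2) by simp
  then show "u i = i" using ui i k by (simp split: if_splits)
  have "card {j \<in> {1..n}. staircase k j (v i)} = card {j \<in> {1..n}. staircase k (u j) (v i)}"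
    using card_filter_permutes[OF u, of "\<lambda>j. staircase k j (v i)"] ..
  also have "\<dots> = card {j \<in> {1..n}. staircase k j i}"
    using aut i by (intro arg_cong[where f = card]) auto
  finally have "card {j \<in> {1..n}. staircase k j (v i)} = card {j \<in> {1..n}. staircase k j i}" .
  moreover have vi: "v i \<in> {1..n}" using permutes_in_image[OF v] i(1) by simp
  ultimately have "(if v i \<le> k then v i else k + 1) = i"
    using card_staircase_col[OF k vi] card_staircase_col[OF k i(1)] i(2) by simp
  then show "v i = i" using i by (simp split: if_splits)
qed

lemma staircase_diagonal_invariant:
  assumes t: "t permutes {k+1..n}" and i: "i \<in> {1..n}" and j: "j \<in> {1..n}"
  shows "staircase k (t i) (t j) = staircase k i j"
proof -
  have fixed: "t x = x" if "x \<le> k" for x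
    using permutes_not_in[OF t] that by simp
  have bottom: "k < t x" if "k < x" "x \<le> n" for x
    using permutes_in_image[OF t, of x] that by simp
  show ?thesis
  proof (cases "i \<le> k")
    case True
    then show ?thesis using fixed bottom[of j] j by (cases "j \<le> k") (auto simp: staircase_def)
  next
    case False
    then show ?thesis using bottom[of i] i permutes_inj[OF t] by (auto simp: staircase_def dest: injD)
  qed
qed

lemma staircase_stabiliser:
  assumes u: "u permutes {1..n}" and v: "v permutes {1..n}" and k: "k \<le> n"
  shows "(\<forall>i\<in>{1..n}. \<forall>j\<in>{1..n}. staircase k (u i) (v j) = staircase k i j)
     \<longleftrightarrow> u = v \<and> u permutes {k+1..n}"
proof
  assume aut: "\<forall>i\<in>{1..n}. \<forall>j\<in>{1..n}. staircase k (u i) (v j) = staircase k i j"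
  note top = staircase_automorphism_fixes_top[OF u v k aut]
  have bottom: "k < u i" if "i \<in> {1..n}" "k < i" for i
  proof (rule ccontr)
    assume "\<not> k < u i"
    moreover have "u i \<in> {1..n}" using permutes_in_image[OF u] that(1) by simp
    ultimately have "u (u i) = u i" using top(1) by simp
    then have "u i = i" using permutes_inj[OF u] by (simp add: inj_eq)
    with \<open>\<not> k < u i\<close> that(2) show False by simp
  qed
  have "u i = v i" for i
  proof (cases "i \<in> {1..n}")
    case True
    show ?thesis
    proof (cases "i \<le> k")
      case False
      have "staircase k i i" by (auto simp: staircase_def)
      then have "staircase k (u i) (v i)" using aut True by blast
      then show ?thesis using bottom[OF True] False by (simp add: staircase_def)
    qed (use top True in simp)
  qed (simp add: permutes_not_in[OF u] permutes_not_in[OF v])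
  moreover have "u permutes {k+1..n}"
    by (rule permutes_superset[OF u]) (use top(1) in auto)
  ultimately show "u = v \<and> u permutes {k+1..n}" by blast
qed (use staircase_diagonal_invariant in blast)

lemma relabel_staircase_eq_iff:
  assumes k: "k \<le> n" and c: "c permutes {1..n}" and d: "d permutes {1..n}"
    and c0: "c0 permutes {1..n}" and d0: "d0 permutes {1..n}"
  shows "relabel n c d (staircase k) = relabel n c0 d0 (staircase k)
     \<longleftrightarrow> (\<exists>t. t permutes {k+1..n} \<and> c = t \<circ> c0 \<and> d = t \<circ> d0)"
proof -
  let ?u = "c \<circ> inv c0" and ?v = "d \<circ> inv d0"
  have u: "?u permutes {1..n}" and v: "?v permutes {1..n}"
    using c d c0 d0 by (simp_all add: permutes_compose permutes_inv)
  have restore: "relabel n c0 d0 (relabel n (inv c0) (inv d0) A) = A" if "A \<in> mats n" for A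
    using relabel_inv_relabel[OF permutes_inv[OF c0] permutes_inv[OF d0] that]
    by (simp add: permutes_inv_inv[OF c0] permutes_inv_inv[OF d0])
  have "relabel n c d (staircase k) = relabel n c0 d0 (staircase k)
      \<longleftrightarrow> relabel n (inv c0) (inv d0) (relabel n c d (staircase k))
        = relabel n (inv c0) (inv d0) (relabel n c0 d0 (staircase k))"
    by (metis restore relabel_in_mats)
  also have "\<dots> \<longleftrightarrow> relabel n ?u ?v (staircase k) = relabel n id id (staircase k)"
    by (simp add: relabel_relabel[OF permutes_inv[OF c0] permutes_inv[OF d0]]
        permutes_inv_o(1)[OF c0] permutes_inv_o(1)[OF d0])
  also have "\<dots> \<longleftrightarrow> ?u = ?v \<and> ?u permutes {k+1..n}"
    unfolding relabel_eq_iff id_apply by (rule staircase_stabiliser[OF u v k])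
  also have "\<dots> \<longleftrightarrow> (\<exists>t. t permutes {k+1..n} \<and> c = t \<circ> c0 \<and> d = t \<circ> d0)"
  proof
    have "c = ?u \<circ> c0" and "d = ?v \<circ> d0"
      by (simp_all add: comp_assoc permutes_inv_o(2)[OF c0] permutes_inv_o(2)[OF d0])
    then show "?u = ?v \<and> ?u permutes {k+1..n} \<Longrightarrow> \<exists>t. t permutes {k+1..n} \<and> c = t \<circ> c0 \<and> d = t \<circ> d0"
      by metis
  next
    assume "\<exists>t. t permutes {k+1..n} \<and> c = t \<circ> c0 \<and> d = t \<circ> d0"
    then obtain t where "t permutes {k+1..n}" "?u = t" "?v = t"
      by (auto simp: comp_assoc permutes_inv_o(1)[OF c0] permutes_inv_o(1)[OF d0])
    then show "?u = ?v \<and> ?u permutes {k+1..n}" by simp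
  qed
  finally show ?thesis .
qed

lemma act_fixes_relabel_staircase_iff:
  assumes k: "k \<le> n" and c: "c permutes {1..n}" and d: "d permutes {1..n}"
    and p: "p permutes {1..n}" and s: "s permutes {1..n}"
  shows "act n p s (relabel n c d (staircase k)) = relabel n c d (staircase k)
     \<longleftrightarrow> (\<exists>t. t permutes {k+1..n} \<and> p = inv c \<circ> t \<circ> c \<and> s = inv d \<circ> t \<circ> d)"
proof -
  have "c \<circ> inv p permutes {1..n}" and "d \<circ> inv s permutes {1..n}"
    using c d p s by (simp_all add: permutes_compose permutes_inv)
  then have "act n p s (relabel n c d (staircase k)) = relabel n c d (staircase k)
      \<longleftrightarrow> (\<exists>t. t permutes {k+1..n} \<and> c = t \<circ> c \<circ> inv p \<and> d = t \<circ> d \<circ> inv s)"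
    unfolding act_relabel[OF p s] eq_commute[of "relabel n (c \<circ> inv p) (d \<circ> inv s) (staircase k)"]
    using relabel_staircase_eq_iff[OF k c d] by (simp add: o_assoc)
  also have "\<dots> \<longleftrightarrow> (\<exists>t. t permutes {k+1..n} \<and> p = inv c \<circ> t \<circ> c \<and> s = inv d \<circ> t \<circ> d)"
    using eq_comp_inv_iff_conj permutes_bij c d p s by metis
  finally show ?thesis .
qed

lemma card_relabel_staircase_fibre:
  assumes k: "k \<le> n" and c0: "c0 permutes {1..n}" and d0: "d0 permutes {1..n}"
  shows "card {(c, d) \<in> {c. c permutes {1..n}} \<times> {d. d permutes {1..n}}.
            relabel n c d (staircase k) = relabel n c0 d0 (staircase k)} = fact (n - k)"
proof -
  let ?T = "{t. t permutes {k+1..n}}"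
  let ?h = "\<lambda>t. (t \<circ> c0, t \<circ> d0)"
  have "t \<circ> c0 permutes {1..n}" and "t \<circ> d0 permutes {1..n}" if "t \<in> ?T" for t
    using that permutes_subset[of t "{k+1..n}" "{1..n}"] c0 d0 by (auto intro: permutes_compose)
  then have "{(c, d) \<in> {c. c permutes {1..n}} \<times> {d. d permutes {1..n}}.
      relabel n c d (staircase k) = relabel n c0 d0 (staircase k)} = ?h ` ?T"
    using relabel_staircase_eq_iff[OF k _ _ c0 d0] by auto
  moreover have "inj_on ?h ?T"
    by (rule inj_onI) (metis c0 comp_assoc comp_id permutes_inv_o(1) prod.inject)
  moreover have "card ?T = fact (n - k)"
    by (rule card_permutations) auto
  ultimately show ?thesis by (simp add: card_image)
qed

lemma card_H:
  assumes k: "k \<le> n"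
  shows "card (H n k) * fact (n - k) = fact n * fact n"
proof -
  let ?S = "{p. p permutes {1..n}}"
  let ?orbit = "\<lambda>(c, d). relabel n c d (staircase k)"
  have "card {y \<in> ?S \<times> ?S. ?orbit y = ?orbit x} = fact (n - k)" if "x \<in> ?S \<times> ?S" for x
  proof -
    obtain c0 d0 where "x = (c0, d0)" "c0 permutes {1..n}" "d0 permutes {1..n}"
      using \<open>x \<in> ?S \<times> ?S\<close> by auto
    moreover have "{y \<in> ?S \<times> ?S. ?orbit y = ?orbit (c0, d0)}
        = {(c, d) \<in> ?S \<times> ?S. relabel n c d (staircase k) = relabel n c0 d0 (staircase k)}"
      by auto
    ultimately show ?thesis using card_relabel_staircase_fibre[OF k] by simp
  qed
  moreover have "H n k = ?orbit ` (?S \<times> ?S)"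
    using H_eq_orbit[OF k] by auto
  moreover have "card (?S \<times> ?S) = fact n * fact n"
    by (simp add: card_cartesian_product card_permutations)
  ultimately show ?thesis
    using card_image_mult_fibre[of "?S \<times> ?S" ?orbit] by (simp add: finite_permutations)
qed

section \<open>Characters and fixed points\<close>

definition fixed_tabloids :: "nat \<Rightarrow> int list \<Rightarrow> (nat \<Rightarrow> nat) \<Rightarrow> (nat \<Rightarrow> nat) set" where
  "fixed_tabloids n al sg = {f \<in> {1..n} \<rightarrow>\<^sub>E {0..<length al}.
     (\<forall>i < length al. int (card {x \<in> {1..n}. f x = i}) = al ! i) \<and> (\<forall>x \<in> {1..n}. f (sg x) = f x)}"

lemma restrict_comp_in_fixed_tabloids:
  assumes c: "c permutes {1..n}" and p: "p permutes {1..n}" and f: "f \<in> fixed_tabloids n al p"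
  shows "restrict (f \<circ> c) {1..n} \<in> fixed_tabloids n al (inv c \<circ> p \<circ> c)"
proof -
  let ?h = "restrict (f \<circ> c) {1..n}"
  have cin: "c x \<in> {1..n} \<longleftrightarrow> x \<in> {1..n}" and cinv: "c (inv c x) = x" for x
    using permutes_in_image[OF c] permutes_inverses(1)[OF c] by blast+
  from f have f_PiE: "f \<in> {1..n} \<rightarrow>\<^sub>E {0..<length al}"
    and fibres: "\<forall>i < length al. int (card {x \<in> {1..n}. f x = i}) = al ! i"
    and fixed: "\<forall>x \<in> {1..n}. f (p x) = f x"
    by (auto simp: fixed_tabloids_def)
  have "?h \<in> {1..n} \<rightarrow>\<^sub>E {0..<length al}" using f_PiE cin by auto
  moreover have "card {x \<in> {1..n}. ?h x = i} = card {x \<in> {1..n}. f x = i}" for i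
  proof -
    have "card {x \<in> {1..n}. ?h x = i} = card {x \<in> {1..n}. f (c x) = i}"
      by (intro arg_cong[where f = card]) auto
    also have "\<dots> = card {x \<in> {1..n}. f x = i}"
      by (rule card_filter_permutes[OF c])
    finally show ?thesis .
  qed
  moreover have "?h ((inv c \<circ> p \<circ> c) x) = ?h x" if "x \<in> {1..n}" for x
  proof -
    have "p (c x) \<in> {1..n}" using that cin permutes_in_image[OF p] by blast
    then have "(inv c \<circ> p \<circ> c) x \<in> {1..n}"
      using permutes_in_image[OF permutes_inv[OF c]] by simp
    then show ?thesis using that cin fixed cinv by simp
  qed
  ultimately show ?thesis
    using fibres by (simp add: fixed_tabloids_def)
qed

lemma card_fixed_tabloids_conj_le:
  assumes c: "c permutes {1..n}" and p: "p permutes {1..n}"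
  shows "card (fixed_tabloids n al p) \<le> card (fixed_tabloids n al (inv c \<circ> p \<circ> c))"
proof (rule card_inj_on_le)
  let ?g = "\<lambda>f. restrict (f \<circ> c) {1..n}"
  show "finite (fixed_tabloids n al (inv c \<circ> p \<circ> c))"
    unfolding fixed_tabloids_def
    by (rule finite_subset[of _ "{1..n} \<rightarrow>\<^sub>E {0..<length al}"]) (auto intro: finite_PiE)
  show "?g ` fixed_tabloids n al p \<subseteq> fixed_tabloids n al (inv c \<circ> p \<circ> c)"
    using restrict_comp_in_fixed_tabloids[OF c p] by blast
  show "inj_on ?g (fixed_tabloids n al p)"
  proof (rule inj_onI)
    fix f f' assume f: "f \<in> fixed_tabloids n al p" and f': "f' \<in> fixed_tabloids n al p"
      and eq: "?g f = ?g f'"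
    show "f = f'"
    proof (rule PiE_ext)
      show "f \<in> {1..n} \<rightarrow>\<^sub>E {0..<length al}" "f' \<in> {1..n} \<rightarrow>\<^sub>E {0..<length al}"
        using f f' by (auto simp: fixed_tabloids_def)
      fix y assume "y \<in> {1..n}"
      then have "?g f (inv c y) = ?g f' (inv c y)" and "inv c y \<in> {1..n}"
        using eq permutes_in_image[OF permutes_inv[OF c]] by auto
      then show "f y = f' y" using permutes_inverses(1)[OF c] by simp
    qed
  qed
qed

lemma card_fixed_tabloids_conj:
  assumes c: "c permutes {1..n}" and p: "p permutes {1..n}"
  shows "card (fixed_tabloids n al (inv c \<circ> p \<circ> c)) = card (fixed_tabloids n al p)"
proof (rule antisym)
  have ic: "inv c permutes {1..n}" using permutes_inv[OF c] .
  have q: "inv c \<circ> p \<circ> c permutes {1..n}"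
    using permutes_compose[OF permutes_compose[OF c p] ic] by (simp add: o_assoc)
  have "inv (inv c) \<circ> (inv c \<circ> p \<circ> c) \<circ> inv c = p"
    by (simp add: fun_eq_iff permutes_inv_inv[OF c] permutes_inverses[OF c])
  then show "card (fixed_tabloids n al (inv c \<circ> p \<circ> c)) \<le> card (fixed_tabloids n al p)"
    using card_fixed_tabloids_conj_le[OF ic q, of al] by simp
qed (rule card_fixed_tabloids_conj_le[OF c p])

lemma irr_char_conj:
  assumes "c permutes {1..n}" and "p permutes {1..n}"
  shows "irr_char n la (inv c \<circ> p \<circ> c) = irr_char n la p"
proof -
  have "young_perm_char n al (inv c \<circ> p \<circ> c) = young_perm_char n al p" for al
    using card_fixed_tabloids_conj[OF assms, of al]
    unfolding young_perm_char_def fixed_tabloids_def by simp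
  then show ?thesis unfolding irr_char_def by simp
qed

lemma sum_stabiliser_chars:
  assumes k: "k \<le> n" and A: "A \<in> H n k"
  shows "(\<Sum>g\<in>{g \<in> {p. p permutes {1..n}} \<times> {s. s permutes {1..n}}. act n (fst g) (snd g) A = A}.
            real_of_int (irr_char n la (fst g) * irr_char n mu (snd g)))
       = (\<Sum>t\<in>{t. t permutes {k+1..n}}. real_of_int (irr_char n la t * irr_char n mu t))"
    (is "(\<Sum>g\<in>?Stab. ?F (fst g) (snd g)) = (\<Sum>t\<in>?T. _)")
proof -
  obtain c d where c: "c permutes {1..n}" and d: "d permutes {1..n}"
    and A_eq: "A = relabel n c d (staircase k)"
    using A H_eq_orbit[OF k] by blast
  let ?g = "\<lambda>t. (inv c \<circ> t \<circ> c, inv d \<circ> t \<circ> d)"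
  have conj_permutes: "inv a \<circ> t \<circ> a permutes {1..n}" if "t permutes {1..n}" "a permutes {1..n}" for a t
    using that by (simp add: permutes_compose permutes_inv)
  have TS: "t permutes {1..n}" if "t \<in> ?T" for t
    using that by (auto elim: permutes_subset)
  have stab_eq: "?Stab = ?g ` ?T"
    using act_fixes_relabel_staircase_iff[OF k c d] conj_permutes TS c d unfolding A_eq by fastforce
  have inj: "inj_on ?g ?T"
  proof (rule inj_onI)
    fix t t' assume "?g t = ?g t'"
    then have "inv c (t (c (inv c y))) = inv c (t' (c (inv c y)))" for y
      by (simp add: fun_eq_iff)
    then show "t = t'"
      by (metis ext permutes_inverses(1)[OF c])
  qed
  have "(\<Sum>g\<in>?Stab. ?F (fst g) (snd g)) = (\<Sum>t\<in>?T. ?F (inv c \<circ> t \<circ> c) (inv d \<circ> t \<circ> d))"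
    by (rule sum.reindex_cong[OF inj stab_eq]) simp
  also have "\<dots> = (\<Sum>t\<in>?T. ?F t t)"
  proof (rule sum.cong[OF refl])
    fix t assume "t \<in> ?T"
    then show "?F (inv c \<circ> t \<circ> c) (inv d \<circ> t \<circ> d) = ?F t t"
      by (simp only: irr_char_conj[OF c TS] irr_char_conj[OF d TS])
  qed
  finally show ?thesis .
qed

lemma sum_chars_card_fixed_points:
  assumes k: "k \<le> n"
  shows "(\<Sum>p\<in>{p. p permutes {1..n}}. \<Sum>s\<in>{s. s permutes {1..n}}.
            real_of_int (irr_char n la p * irr_char n mu s) * real (card {A \<in> H n k. act n p s A = A}))
       = real (card (H n k)) * (\<Sum>t\<in>{t. t permutes {k+1..n}}. real_of_int (irr_char n la t * irr_char n mu t))"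
proof -
  let ?S = "{p. p permutes {1..n}}"
  let ?F = "\<lambda>p s. real_of_int (irr_char n la p * irr_char n mu s)"
  have finite_H: "finite (H n k)"
    using H_eq_orbit[OF k] finite_permutations[of "{1..n}"] by (simp add: finite_image_set2)
  have "(\<Sum>p\<in>?S. \<Sum>s\<in>?S. ?F p s * real (card {A \<in> H n k. act n p s A = A}))
      = (\<Sum>g\<in>?S \<times> ?S. ?F (fst g) (snd g) * real (card {A \<in> H n k. act n (fst g) (snd g) A = A}))"
    by (simp add: sum.cartesian_product case_prod_unfold)
  also have "\<dots> = (\<Sum>A\<in>H n k. \<Sum>g\<in>{g \<in> ?S \<times> ?S. act n (fst g) (snd g) A = A}. ?F (fst g) (snd g))"
    by (rule sum_weighted_card_filter_swap) (simp_all add: finite_H finite_permutations)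
  also have "\<dots> = real (card (H n k)) * (\<Sum>t\<in>{t. t permutes {k+1..n}}. ?F t t)"
    using sum_stabiliser_chars[OF k] by simp
  finally show ?thesis .
qed

theorem mainTheorem13:
  fixes n k :: nat and la mu :: "nat list"
  assumes "k \<le> n" and "is_partition n la" and "is_partition n mu"
  shows "mult_H n k la mu = restr_ip n k la mu"
proof -
  define K where "K = (\<Sum>t\<in>{t. t permutes {k+1..n}}. real_of_int (irr_char n la t * irr_char n mu t))"
  have "real (card (H n k)) * real (fact (n - k)) = (real (fact n))\<^sup>2"
    using card_H[OF assms(1)] by (metis of_nat_mult power2_eq_square)
  then have "real (card (H n k)) * K / (real (fact n))\<^sup>2 = K / real (fact (n - k))"
    by (simp add: field_simps)
  then show ?thesis
    unfolding mult_H_def restr_ip_def sum_chars_card_fixed_points[OF assms(1)] K_def .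
qed
end
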